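(* Let $p\ge2$, $X=\{0,1,\dots,p\}$, and for $w\in X^\infty$ let $I_w=\{z\in X^\infty:\Gamma^p_z\text{ and }\Gamma^p_w\text{ are isomorphic}\}$. Then $\nu(I_w)=0$ for every $w\in X^\infty$.
   Context: $\mathcal G_{S_p}$ is the group generated by $e_1,\dots,e_p$ acting on $X^\infty$ by $e_i(0x)=i\,e_i(x)$, $e_i(ix)=0x$, $e_i(jx)=jx$ for $j\notin\{0,i\}$; $\Gamma^p_w$ is the infinite Schreier graph with vertex set the orbit of $w$ and an edge joining $x$ and $e_i(x)$ for each vertex $x$ and each $i$; isomorphism is isomorphism of unrooted graphs. $\nu$ is the uniform (Bernoulli product) measure on $X^\infty$. *)

theory Defs
  imports "HOL-Probability.Probability"
begin

text \<open>Infinite words over X = {0,..,p} are modelled as functions nat \<Rightarrow> nat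
  (with values \<le> p when they belong to X^\<infinity>).\<close>

definition word_cons :: "nat \<Rightarrow> (nat \<Rightarrow> nat) \<Rightarrow> nat \<Rightarrow> nat" where
  "word_cons a x = (\<lambda>k. case k of 0 \<Rightarrow> a | Suc k' \<Rightarrow> x k')"

text \<open>The generator e_i, given explicitly: e_i(0x) = i e_i(x), e_i(ix) = 0x,
  e_i(jx) = jx for j not in {0,i}; on the all-zero word it gives the constant word i.\<close>
definition gen_e :: "nat \<Rightarrow> (nat \<Rightarrow> nat) \<Rightarrow> nat \<Rightarrow> nat" where
  "gen_e i x =
     (if \<exists>n. x n \<noteq> 0 then
        (let m = (LEAST n. x n \<noteq> 0) in
          (\<lambda>k. if k < m then i else if k = m then (if x m = i then 0 else x m) else x k))
      else (\<lambda>_. i))"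

inductive_set orbit :: "nat \<Rightarrow> (nat \<Rightarrow> nat) \<Rightarrow> (nat \<Rightarrow> nat) set" for p w where
  base: "w \<in> orbit p w"
| fwd: "x \<in> orbit p w \<Longrightarrow> 1 \<le> i \<Longrightarrow> i \<le> p \<Longrightarrow> gen_e i x \<in> orbit p w"
| bwd: "x \<in> orbit p w \<Longrightarrow> 1 \<le> i \<Longrightarrow> i \<le> p \<Longrightarrow> gen_e i y = x \<Longrightarrow> y \<in> orbit p w"

text \<open>Schreier graph Gamma^p_w as a multigraph: one edge (x,i) for every vertex x
  and every i in {1..p}, joining x and e_i(x) (a loop if e_i(x) = x).\<close>
definition schreier_edges :: "nat \<Rightarrow> (nat \<Rightarrow> nat) \<Rightarrow> ((nat \<Rightarrow> nat) \<times> nat) set" where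
  "schreier_edges p w = {(x, i). x \<in> orbit p w \<and> 1 \<le> i \<and> i \<le> p}"

definition edge_ends :: "((nat \<Rightarrow> nat) \<times> nat) \<Rightarrow> (nat \<Rightarrow> nat) set" where
  "edge_ends \<epsilon> = {fst \<epsilon>, gen_e (snd \<epsilon>) (fst \<epsilon>)}"

definition schreier_iso :: "nat \<Rightarrow> (nat \<Rightarrow> nat) \<Rightarrow> (nat \<Rightarrow> nat) \<Rightarrow> bool" where
  "schreier_iso p w z =
     (\<exists>f g. bij_betw f (orbit p w) (orbit p z) \<and>
            bij_betw g (schreier_edges p w) (schreier_edges p z) \<and>
            (\<forall>\<epsilon>\<in>schreier_edges p w. edge_ends (g \<epsilon>) = f ` edge_ends \<epsilon>))"

definition nu :: "nat \<Rightarrow> (nat \<Rightarrow> nat) measure" where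
  "nu p = (\<Pi>\<^sub>M n\<in>(UNIV::nat set). measure_pmf (pmf_of_set {0..p}))"

definition X_inf :: "nat \<Rightarrow> (nat \<Rightarrow> nat) set" where
  "X_inf p = {x. \<forall>n. x n \<le> p}"

definition iso_class :: "nat \<Rightarrow> (nat \<Rightarrow> nat) \<Rightarrow> (nat \<Rightarrow> nat) set" where
  "iso_class p w = {z \<in> X_inf p. schreier_iso p z w}"


end

theory Submission
  imports Defs
begin

text \<open>
  An isomorphism of Schreier graphs preserves loops, which sit exactly at the words with a nonzero
  first letter, and double edges. The words of the orbit of \<open>z\<close> that begin with 0 form a copy of
  the Schreier graph of the shifted word \<open>\<sigma>z\<close>, whose edges correspond to the words of the orbit
  that begin with a nonzero letter. Hence an isomorphism \<open>\<Gamma>(z) \<rightarrow> \<Gamma>(z')\<close> sending \<open>z\<close> to \<open>z'\<close> induces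
  one \<open>\<Gamma>(\<sigma>z) \<rightarrow> \<Gamma>(\<sigma>z')\<close> sending \<open>\<sigma>z\<close> to \<open>\<sigma>z'\<close>, as soon as the second letters of \<open>z\<close> and \<open>z'\<close> are
  both zero or both nonzero. Iterating, if \<open>z\<close> and \<open>z'\<close> agree up to position \<open>n\<close>, the roots of
  \<open>\<Gamma>(\<sigma>\<^sup>n z)\<close> and \<open>\<Gamma>(\<sigma>\<^sup>n z')\<close> both have a double edge or both have none; this is a condition on
  the letters at positions \<open>n\<close> and \<open>n + 1\<close> that rules out one of the \<open>p + 1\<close> letters at position
  \<open>n + 1\<close>. A set of words in which every prefix has such a forbidden continuation is covered, for
  every \<open>N\<close>, by at most \<open>(p + 1) p\<^sup>N\<close> cylinders of measure \<open>(p + 1)\<^sup>-\<^sup>N\<^sup>-\<^sup>1\<close>, so it is null.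
  Finally \<open>I\<^sub>w\<close> is the countable union, over the vertices \<open>v\<close> of \<open>\<Gamma>(w)\<close>, of the sets of words \<open>z\<close>
  having an isomorphism \<open>\<Gamma>(z) \<rightarrow> \<Gamma>(w)\<close> that sends \<open>z\<close> to \<open>v\<close>, and any two words of such a set
  are related by a root-preserving isomorphism.
\<close>

definition word_tail :: "(nat \<Rightarrow> nat) \<Rightarrow> nat \<Rightarrow> nat" where
  "word_tail x = (\<lambda>k. x (Suc k))"

lemma word_cons_0 [simp]: "word_cons a x 0 = a"
  by (simp add: word_cons_def)

lemma word_cons_Suc [simp]: "word_cons a x (Suc k) = x k"
  by (simp add: word_cons_def)

lemma word_cons_head_tail [simp]: "word_cons (x 0) (word_tail x) = x"
  by (rule ext) (simp add: word_cons_def word_tail_def split: nat.split)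

lemma word_tail_cons [simp]: "word_tail (word_cons a x) = x"
  by (simp add: word_tail_def)

lemma word_cons_eq_iff [simp]: "word_cons a x = word_cons b y \<longleftrightarrow> a = b \<and> x = y"
  by (metis word_tail_cons word_cons_0)

lemma word_cons_cases: obtains a y where "x = word_cons a y"
  using word_cons_head_tail by metis

definition carry :: "nat \<Rightarrow> nat \<Rightarrow> (nat \<Rightarrow> nat) \<Rightarrow> nat \<Rightarrow> nat" where
  "carry a b x =
     (if \<exists>n. x n \<noteq> a then
        (let m = (LEAST n. x n \<noteq> a) in
          (\<lambda>k. if k < m then b else if k = m then (if x m = b then a else x m) else x k))
      else (\<lambda>_. b))"

lemma gen_e_eq_carry: "gen_e i = carry 0 i"
  by (rule ext) (simp add: gen_e_def carry_def)

lemma carry_word_cons: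
  assumes "a \<noteq> b"
  shows "carry a b (word_cons c y) =
    (if c = a then word_cons b (carry a b y) else if c = b then word_cons a y else word_cons c y)"
proof (cases "c = a")
  case True
  show ?thesis
  proof (cases "\<exists>n. y n \<noteq> a")
    case True
    then obtain n where "y n \<noteq> a" by blast
    then have "(LEAST n. word_cons a y n \<noteq> a) = Suc (LEAST n. y n \<noteq> a)"
      using Least_Suc[of "\<lambda>n. word_cons a y n \<noteq> a" "Suc n"] by simp
    with True \<open>c = a\<close> show ?thesis
      by (auto simp: carry_def word_cons_def Let_def split: nat.split intro!: ext exI[of _ "Suc n"])
  next
    case False
    then have "\<not> (\<exists>n. word_cons a y n \<noteq> a)"
      by (auto simp: word_cons_def split: nat.split)
    with False \<open>c = a\<close> show ?thesis
      by (auto simp: carry_def word_cons_def split: nat.split intro!: ext)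
  qed
next
  case False
  then have "\<exists>n. word_cons c y n \<noteq> a" and "(LEAST n. word_cons c y n \<noteq> a) = 0"
    by (auto intro!: exI[of _ 0] Least_eq_0)
  with False assms show ?thesis
    by (auto simp: carry_def Let_def word_cons_def split: nat.split intro!: ext)
qed

lemma carry_carry:
  assumes "a \<noteq> b"
  shows "carry b a (carry a b x) = x"
proof -
  have "carry b a (carry a b x) k = x k" for x k
  proof (induction k arbitrary: x)
    case 0
    show ?case using assms by (cases x rule: word_cons_cases) (simp add: carry_word_cons)
  next
    case (Suc k)
    show ?case using assms Suc by (cases x rule: word_cons_cases) (simp add: carry_word_cons)
  qed
  then show ?thesis by (simp add: fun_eq_iff)
qed

lemma gen_e_word_cons:
  assumes "i \<noteq> 0"
  shows "gen_e i (word_cons c y) =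
    (if c = 0 then word_cons i (gen_e i y) else if c = i then word_cons 0 y else word_cons c y)"
  using carry_word_cons[of 0 i] assms by (simp add: gen_e_eq_carry)

lemma carry_gen_e [simp]: "i \<noteq> 0 \<Longrightarrow> carry i 0 (gen_e i x) = x"
  by (simp add: gen_e_eq_carry carry_carry)

lemma gen_e_carry [simp]: "i \<noteq> 0 \<Longrightarrow> gen_e i (carry i 0 x) = x"
  by (simp add: gen_e_eq_carry carry_carry)

lemma gen_e_eq_iff: "i \<noteq> 0 \<Longrightarrow> gen_e i x = gen_e i y \<longleftrightarrow> x = y"
  by (metis carry_gen_e)

lemma gen_e_eq_self_iff: "i \<noteq> 0 \<Longrightarrow> gen_e i x = x \<longleftrightarrow> x 0 \<noteq> 0 \<and> x 0 \<noteq> i"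
  by (cases x rule: word_cons_cases) (auto simp: gen_e_word_cons)

lemma gen_e_moved_head:
  assumes "i \<noteq> 0" "gen_e i x \<noteq> x"
  shows "{x 0, gen_e i x 0} = {0, i}"
  using assms by (cases x rule: word_cons_cases) (auto simp: gen_e_word_cons)

lemma orbit_word_tail:
  assumes "u \<in> orbit p z"
  shows "word_tail u \<in> orbit p (word_tail z)"
  using assms
proof (induction rule: orbit.induct)
  case base
  show ?case by (rule orbit.base)
next
  case (fwd x i)
  then show ?case
    by (cases x rule: word_cons_cases) (auto simp: gen_e_word_cons intro: orbit.fwd)
next
  case (bwd x i y)
  obtain c y' where y: "y = word_cons c y'" by (rule word_cons_cases)
  show ?case
  proof (cases "c = 0")
    case True
    with bwd y have "word_tail x = gen_e i y'" by (auto simp: gen_e_word_cons)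
    with bwd True y show ?thesis by (auto intro: orbit.bwd)
  next
    case False
    with bwd y show ?thesis by (auto simp: gen_e_word_cons split: if_splits)
  qed
qed

lemma orbit_head_le:
  assumes "z 0 \<le> p" "u \<in> orbit p z"
  shows "u 0 \<le> p"
  using assms(2)
proof (induction rule: orbit.induct)
  case (fwd x i)
  then show ?case
    by (cases x rule: word_cons_cases) (auto simp: gen_e_word_cons)
next
  case (bwd x i y)
  then show ?case
    by (cases y rule: word_cons_cases) (auto simp: gen_e_word_cons split: if_splits)
qed (use assms in simp)

lemma orbit_word_cons_swap:
  assumes "word_cons b y \<in> orbit p z" "b \<le> p" "a \<le> p"
  shows "word_cons a y \<in> orbit p z"
proof -
  have "word_cons 0 y \<in> orbit p z"
  proof (cases "b = 0")
    case False
    then have "gen_e b (word_cons b y) = word_cons 0 y" by (simp add: gen_e_word_cons)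
    with False assms(1,2) show ?thesis using orbit.fwd[OF assms(1), of b] by simp
  qed (use assms(1) in simp)
  show ?thesis
  proof (cases "a = 0")
    case False
    then have "gen_e a (word_cons a y) = word_cons 0 y" by (simp add: gen_e_word_cons)
    with False show ?thesis
      by (intro orbit.bwd[OF \<open>word_cons 0 y \<in> orbit p z\<close> _ assms(3)]) simp_all
  qed (use \<open>word_cons 0 y \<in> orbit p z\<close> in simp)
qed

lemma orbit_word_cons:
  assumes "z 0 \<le> p" "y \<in> orbit p (word_tail z)" "a \<le> p"
  shows "word_cons a y \<in> orbit p z"
  using assms(2,3)
proof (induction arbitrary: a rule: orbit.induct)
  case base
  then show ?case
    using orbit_word_cons_swap[of "z 0" "word_tail z" p z a] assms(1) by (auto intro: orbit.base)
next
  case (fwd x i)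
  then have "gen_e i (word_cons 0 x) \<in> orbit p z"
    by (auto intro: orbit.fwd)
  with fwd have "word_cons i (gen_e i x) \<in> orbit p z"
    by (simp add: gen_e_word_cons)
  with fwd show ?case using orbit_word_cons_swap by blast
next
  case (bwd x i y)
  then have "gen_e i (word_cons 0 y) = word_cons i x"
    by (simp add: gen_e_word_cons)
  with bwd have "word_cons 0 y \<in> orbit p z"
    using orbit.bwd[OF bwd.IH[of i], of i] by simp
  with bwd show ?case using orbit_word_cons_swap by blast
qed

lemma orbit_countable: "countable (orbit p w)"
proof -
  define act :: "(nat \<times> bool) list \<Rightarrow> nat \<Rightarrow> nat" where
    "act l = foldr (\<lambda>(i, b) x. if b then gen_e i x else carry i 0 x) l w" for l
  have "x \<in> range act" if "x \<in> orbit p w" for x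
    using that
  proof (induction rule: orbit.induct)
    case base
    have "act [] = w" by (simp add: act_def)
    then show ?case by (metis rangeI)
  next
    case (fwd x i)
    then obtain l where "x = act l" by blast
    then have "gen_e i x = act ((i, True) # l)" by (simp add: act_def)
    then show ?case by (metis rangeI)
  next
    case (bwd x i y)
    then obtain l where "x = act l" by blast
    moreover have "y = carry i 0 x"
      using bwd by (metis carry_gen_e not_one_le_zero)
    ultimately have "y = act ((i, False) # l)" by (simp add: act_def)
    then show ?case by (metis rangeI)
  qed
  then have "orbit p w \<subseteq> range act" by blast
  moreover have "countable (range act)" by simp
  ultimately show ?thesis by (rule countable_subset)
qed

section \<open>Isomorphism invariants of Schreier graphs\<close>

definition is_schreier_iso ::
    "nat \<Rightarrow> (nat \<Rightarrow> nat) \<Rightarrow> (nat \<Rightarrow> nat) \<Rightarrow> ((nat \<Rightarrow> nat) \<Rightarrow> nat \<Rightarrow> nat)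
      \<Rightarrow> ((nat \<Rightarrow> nat) \<times> nat \<Rightarrow> (nat \<Rightarrow> nat) \<times> nat) \<Rightarrow> bool" where
  "is_schreier_iso p z z' f g \<longleftrightarrow>
     bij_betw f (orbit p z) (orbit p z') \<and>
     bij_betw g (schreier_edges p z) (schreier_edges p z') \<and>
     (\<forall>\<epsilon>\<in>schreier_edges p z. edge_ends (g \<epsilon>) = f ` edge_ends \<epsilon>)"

lemma schreier_iso_iff: "schreier_iso p z z' \<longleftrightarrow> (\<exists>f g. is_schreier_iso p z z' f g)"
  by (simp add: schreier_iso_def is_schreier_iso_def)

lemma schreier_iso_bij_betw_orbit:
  "is_schreier_iso p z z' f g \<Longrightarrow> bij_betw f (orbit p z) (orbit p z')"
  by (simp add: is_schreier_iso_def)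

definition has_loop :: "nat \<Rightarrow> (nat \<Rightarrow> nat) \<Rightarrow> (nat \<Rightarrow> nat) \<Rightarrow> bool" where
  "has_loop p z x \<longleftrightarrow> (\<exists>\<epsilon>\<in>schreier_edges p z. edge_ends \<epsilon> = {x})"

definition adjacent :: "nat \<Rightarrow> (nat \<Rightarrow> nat) \<Rightarrow> (nat \<Rightarrow> nat) \<Rightarrow> (nat \<Rightarrow> nat) \<Rightarrow> bool" where
  "adjacent p z x y \<longleftrightarrow> (\<exists>\<epsilon>\<in>schreier_edges p z. edge_ends \<epsilon> = {x, y})"

definition has_multi_edge :: "nat \<Rightarrow> (nat \<Rightarrow> nat) \<Rightarrow> (nat \<Rightarrow> nat) \<Rightarrow> bool" where
  "has_multi_edge p z x \<longleftrightarrow>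
     (\<exists>y \<epsilon>\<^sub>1 \<epsilon>\<^sub>2. y \<noteq> x \<and> \<epsilon>\<^sub>1 \<in> schreier_edges p z \<and> \<epsilon>\<^sub>2 \<in> schreier_edges p z \<and> \<epsilon>\<^sub>1 \<noteq> \<epsilon>\<^sub>2 \<and>
        edge_ends \<epsilon>\<^sub>1 = {x, y} \<and> edge_ends \<epsilon>\<^sub>2 = {x, y})"

lemma Pair_in_schreier_edges [simp]:
  "(x, i) \<in> schreier_edges p z \<longleftrightarrow> x \<in> orbit p z \<and> 1 \<le> i \<and> i \<le> p"
  by (simp add: schreier_edges_def)

lemma edge_ends_Pair [simp]: "edge_ends (x, i) = {x, gen_e i x}"
  by (simp add: edge_ends_def)

lemma edge_ends_subset_orbit: "\<epsilon> \<in> schreier_edges p z \<Longrightarrow> edge_ends \<epsilon> \<subseteq> orbit p z"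
  by (cases \<epsilon>) (auto intro: orbit.fwd)

lemma schreier_iso_inv:
  assumes "is_schreier_iso p z z' f g"
  shows "is_schreier_iso p z' z (inv_into (orbit p z) f) (inv_into (schreier_edges p z) g)"
  unfolding is_schreier_iso_def
proof (intro conjI ballI)
  show "bij_betw (inv_into (orbit p z) f) (orbit p z') (orbit p z)"
    and "bij_betw (inv_into (schreier_edges p z) g) (schreier_edges p z') (schreier_edges p z)"
    using assms by (simp_all add: is_schreier_iso_def bij_betw_inv_into)
  fix \<epsilon> assume "\<epsilon> \<in> schreier_edges p z'"
  then obtain \<delta> where \<delta>: "\<delta> \<in> schreier_edges p z" "\<epsilon> = g \<delta>"
    using assms unfolding is_schreier_iso_def bij_betw_def by blast
  moreover have "inv_into (schreier_edges p z) g (g \<delta>) = \<delta>"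
    using assms \<delta>(1) by (simp add: is_schreier_iso_def bij_betw_def)
  moreover have "edge_ends (g \<delta>) = f ` edge_ends \<delta>" "inj_on f (orbit p z)"
    using assms \<delta>(1) by (auto simp: is_schreier_iso_def bij_betw_def)
  ultimately show "edge_ends (inv_into (schreier_edges p z) g \<epsilon>) = inv_into (orbit p z) f ` edge_ends \<epsilon>"
    using edge_ends_subset_orbit[OF \<delta>(1)] by (simp add: inv_into_image_cancel)
qed

lemma schreier_iso_comp:
  assumes "is_schreier_iso p z z' f g" "is_schreier_iso p z' z'' f' g'"
  shows "is_schreier_iso p z z'' (f' \<circ> f) (g' \<circ> g)"
proof -
  have "edge_ends ((g' \<circ> g) \<epsilon>) = (f' \<circ> f) ` edge_ends \<epsilon>" if "\<epsilon> \<in> schreier_edges p z" for \<epsilon>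
  proof -
    have "g \<epsilon> \<in> schreier_edges p z'"
      using assms(1) that by (auto simp: is_schreier_iso_def bij_betw_def)
    with assms that show ?thesis by (simp add: is_schreier_iso_def image_comp)
  qed
  with assms show ?thesis
    unfolding is_schreier_iso_def by (blast intro: bij_betw_trans)
qed

lemma schreier_iso_inv_into_apply:
  "is_schreier_iso p z z' f g \<Longrightarrow> x \<in> orbit p z \<Longrightarrow> inv_into (orbit p z) f (f x) = x"
  by (simp add: is_schreier_iso_def bij_betw_def inv_into_f_f)

lemma has_loop_iso: "is_schreier_iso p z z' f g \<Longrightarrow> has_loop p z x \<Longrightarrow> has_loop p z' (f x)"
  unfolding is_schreier_iso_def has_loop_def bij_betw_def by (metis image_eqI image_empty image_insert)

lemma adjacent_iso:
  "is_schreier_iso p z z' f g \<Longrightarrow> adjacent p z x y \<Longrightarrow> adjacent p z' (f x) (f y)"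
  unfolding is_schreier_iso_def adjacent_def bij_betw_def by (metis image_eqI image_empty image_insert)

lemma has_multi_edge_iso:
  assumes "is_schreier_iso p z z' f g" "has_multi_edge p z x"
  shows "has_multi_edge p z' (f x)"
proof -
  obtain y \<epsilon>\<^sub>1 \<epsilon>\<^sub>2 where e: "y \<noteq> x" "\<epsilon>\<^sub>1 \<in> schreier_edges p z" "\<epsilon>\<^sub>2 \<in> schreier_edges p z"
    "\<epsilon>\<^sub>1 \<noteq> \<epsilon>\<^sub>2" "edge_ends \<epsilon>\<^sub>1 = {x, y}" "edge_ends \<epsilon>\<^sub>2 = {x, y}"
    using assms(2) unfolding has_multi_edge_def by blast
  have "x \<in> orbit p z" "y \<in> orbit p z"
    using edge_ends_subset_orbit[OF e(2)] e(5) by auto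
  with assms(1) e have "f y \<noteq> f x" "g \<epsilon>\<^sub>1 \<noteq> g \<epsilon>\<^sub>2"
    "g \<epsilon>\<^sub>1 \<in> schreier_edges p z'" "g \<epsilon>\<^sub>2 \<in> schreier_edges p z'"
    "edge_ends (g \<epsilon>\<^sub>1) = {f x, f y}" "edge_ends (g \<epsilon>\<^sub>2) = {f x, f y}"
    by (auto simp: is_schreier_iso_def bij_betw_def inj_on_eq_iff)
  then show ?thesis unfolding has_multi_edge_def by blast
qed

lemma has_loop_iso_iff:
  assumes "is_schreier_iso p z z' f g" "x \<in> orbit p z"
  shows "has_loop p z' (f x) \<longleftrightarrow> has_loop p z x"
  using has_loop_iso[OF assms(1)] has_loop_iso[OF schreier_iso_inv[OF assms(1)], of "f x"]
    schreier_iso_inv_into_apply[OF assms] by auto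

lemma adjacent_iso_iff:
  assumes "is_schreier_iso p z z' f g" "x \<in> orbit p z" "y \<in> orbit p z"
  shows "adjacent p z' (f x) (f y) \<longleftrightarrow> adjacent p z x y"
  using adjacent_iso[OF assms(1)] adjacent_iso[OF schreier_iso_inv[OF assms(1)], of "f x" "f y"]
    schreier_iso_inv_into_apply[OF assms(1,2)] schreier_iso_inv_into_apply[OF assms(1,3)] by auto

lemma has_multi_edge_iso_iff:
  assumes "is_schreier_iso p z z' f g" "x \<in> orbit p z"
  shows "has_multi_edge p z' (f x) \<longleftrightarrow> has_multi_edge p z x"
  using has_multi_edge_iso[OF assms(1)] has_multi_edge_iso[OF schreier_iso_inv[OF assms(1)], of "f x"]
    schreier_iso_inv_into_apply[OF assms] by auto

lemma exists_generator_ne: "2 \<le> p \<Longrightarrow> \<exists>i\<in>{1..p}. (c::nat) \<noteq> i"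
  by (rule bexI[of _ "if c = 1 then 2 else 1"]) auto

lemma has_loop_iff:
  assumes "2 \<le> p" "x \<in> orbit p z"
  shows "has_loop p z x \<longleftrightarrow> x 0 \<noteq> 0"
proof -
  have "has_loop p z x \<longleftrightarrow> (\<exists>i\<in>{1..p}. gen_e i x = x)"
    using assms(2) by (force simp: has_loop_def schreier_edges_def)
  also have "\<dots> \<longleftrightarrow> (\<exists>i\<in>{1..p}. x 0 \<noteq> 0 \<and> x 0 \<noteq> i)"
    by (rule bex_cong[OF refl]) (auto simp: gen_e_eq_self_iff)
  also have "\<dots> \<longleftrightarrow> x 0 \<noteq> 0"
    using exists_generator_ne[OF assms(1), of "x 0"] by auto
  finally show ?thesis .
qed

lemma schreier_edge_between:
  assumes "\<epsilon> \<in> schreier_edges p z" "edge_ends \<epsilon> = {x, v}"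
  obtains i where "1 \<le> i" "i \<le> p" "\<epsilon> = (x, i) \<and> gen_e i x = v \<or> \<epsilon> = (v, i) \<and> gen_e i v = x"
  using assms by (cases \<epsilon>) (auto simp: doubleton_eq_iff)

lemma schreier_edge_between_distinct:
  assumes "\<epsilon> \<in> schreier_edges p z" "edge_ends \<epsilon> = {x, v}" "v \<noteq> x"
  obtains i where "1 \<le> i" "i \<le> p" "{x 0, v 0} = {0, i}"
    "\<epsilon> = (x, i) \<and> gen_e i x = v \<or> \<epsilon> = (v, i) \<and> gen_e i v = x"
proof -
  obtain i where i: "1 \<le> i" "i \<le> p" "\<epsilon> = (x, i) \<and> gen_e i x = v \<or> \<epsilon> = (v, i) \<and> gen_e i v = x"
    using assms(1,2) by (rule schreier_edge_between)
  from i(3) have "{x 0, v 0} = {0, i}"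
  proof (elim disjE conjE)
    assume "gen_e i x = v"
    moreover have "{x 0, gen_e i x 0} = {0, i}"
      by (rule gen_e_moved_head) (use i(1) assms(3) \<open>gen_e i x = v\<close> in auto)
    ultimately show ?thesis by simp
  next
    assume "gen_e i v = x"
    moreover have "{v 0, gen_e i v 0} = {0, i}"
      by (rule gen_e_moved_head) (use i(1) assms(3) \<open>gen_e i v = x\<close> in auto)
    ultimately show ?thesis by (simp add: insert_commute)
  qed
  with i show thesis by (intro that) simp_all
qed

lemma has_multi_edge_iff_two_cycle:
  assumes "x \<in> orbit p z"
  shows "has_multi_edge p z x \<longleftrightarrow> (\<exists>i\<in>{1..p}. gen_e i x \<noteq> x \<and> gen_e i (gen_e i x) = x)"
proof
  assume "has_multi_edge p z x"
  then obtain v \<epsilon>\<^sub>1 \<epsilon>\<^sub>2 where e: "v \<noteq> x" "\<epsilon>\<^sub>1 \<in> schreier_edges p z" "\<epsilon>\<^sub>2 \<in> schreier_edges p z"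
    "\<epsilon>\<^sub>1 \<noteq> \<epsilon>\<^sub>2" "edge_ends \<epsilon>\<^sub>1 = {x, v}" "edge_ends \<epsilon>\<^sub>2 = {x, v}"
    unfolding has_multi_edge_def by blast
  obtain i\<^sub>1 where i\<^sub>1: "1 \<le> i\<^sub>1" "i\<^sub>1 \<le> p" "{x 0, v 0} = {0, i\<^sub>1}"
    "\<epsilon>\<^sub>1 = (x, i\<^sub>1) \<and> gen_e i\<^sub>1 x = v \<or> \<epsilon>\<^sub>1 = (v, i\<^sub>1) \<and> gen_e i\<^sub>1 v = x"
    using e(2,5,1) by (rule schreier_edge_between_distinct)
  obtain i\<^sub>2 where i\<^sub>2: "1 \<le> i\<^sub>2" "{x 0, v 0} = {0, i\<^sub>2}"
    "\<epsilon>\<^sub>2 = (x, i\<^sub>2) \<and> gen_e i\<^sub>2 x = v \<or> \<epsilon>\<^sub>2 = (v, i\<^sub>2) \<and> gen_e i\<^sub>2 v = x"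
    using e(3,6,1) by (rule schreier_edge_between_distinct)
  from i\<^sub>1(1,3) i\<^sub>2(2) have "i\<^sub>1 = i\<^sub>2" by (simp add: doubleton_eq_iff)
  then have "gen_e i\<^sub>1 x = v \<and> gen_e i\<^sub>1 v = x"
    using i\<^sub>1(4) i\<^sub>2(3) e(4) by (elim disjE conjE) simp_all
  with i\<^sub>1(1,2) e(1) show "\<exists>i\<in>{1..p}. gen_e i x \<noteq> x \<and> gen_e i (gen_e i x) = x"
    by auto
next
  assume "\<exists>i\<in>{1..p}. gen_e i x \<noteq> x \<and> gen_e i (gen_e i x) = x"
  then obtain i where i: "1 \<le> i" "i \<le> p" "gen_e i x \<noteq> x" "gen_e i (gen_e i x) = x" by auto
  moreover have "gen_e i x \<in> orbit p z"
    using orbit.fwd[OF assms i(1,2)] .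
  ultimately show "has_multi_edge p z x"
    unfolding has_multi_edge_def
    by (intro exI[of _ "gen_e i x"] exI[of _ "(x, i)"] exI[of _ "(gen_e i x, i)"]) (simp add: assms insert_commute)
qed

lemma gen_e_two_cycle_iff:
  assumes "i \<noteq> 0"
  shows "gen_e i x \<noteq> x \<and> gen_e i (gen_e i x) = x \<longleftrightarrow>
    (x 0 = 0 \<or> x 0 = i) \<and> x (Suc 0) \<noteq> 0 \<and> x (Suc 0) \<noteq> i"
proof -
  obtain c y where x: "x = word_cons c y" by (rule word_cons_cases)
  show ?thesis
    using assms gen_e_eq_self_iff[OF assms, of y]
    by (cases "c = 0"; cases "c = i") (simp_all add: x gen_e_word_cons)
qed

definition simple_at :: "(nat \<Rightarrow> nat) \<Rightarrow> nat \<Rightarrow> bool" where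
  "simple_at z n \<longleftrightarrow> z (Suc n) = 0 \<or> (z n \<noteq> 0 \<and> z (Suc n) = z n)"

lemma has_multi_edge_iff:
  assumes "2 \<le> p" "x \<in> orbit p z" "x 0 \<le> p"
  shows "has_multi_edge p z x \<longleftrightarrow> \<not> simple_at x 0"
proof -
  have "has_multi_edge p z x \<longleftrightarrow> (\<exists>i\<in>{1..p}. gen_e i x \<noteq> x \<and> gen_e i (gen_e i x) = x)"
    using assms(2) by (rule has_multi_edge_iff_two_cycle)
  also have "\<dots> \<longleftrightarrow> (\<exists>i\<in>{1..p}. (x 0 = 0 \<or> x 0 = i) \<and> x (Suc 0) \<noteq> 0 \<and> x (Suc 0) \<noteq> i)"
    by (rule bex_cong[OF refl], rule gen_e_two_cycle_iff) simp
  also have "\<dots> \<longleftrightarrow> \<not> simple_at x 0"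
    using exists_generator_ne[OF assms(1), of "x (Suc 0)"] assms(3)
    by (cases "x 0 = 0") (auto simp: simple_at_def)
  finally show ?thesis .
qed

section \<open>Passing to the shifted word\<close>

definition zero_neighbours :: "nat \<Rightarrow> (nat \<Rightarrow> nat) \<Rightarrow> (nat \<Rightarrow> nat) \<Rightarrow> (nat \<Rightarrow> nat) set" where
  "zero_neighbours p z m = {u \<in> orbit p z. adjacent p z m u \<and> u 0 = 0}"

lemma iso_head_eq_0_iff:
  assumes "2 \<le> p" "is_schreier_iso p z z' f g" "u \<in> orbit p z"
  shows "f u 0 = 0 \<longleftrightarrow> u 0 = 0"
proof -
  have "f u \<in> orbit p z'"
    using schreier_iso_bij_betw_orbit[OF assms(2)] assms(3) by (rule bij_betw_apply)
  moreover have "has_loop p z' (f u) \<longleftrightarrow> has_loop p z u"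
    using assms(2,3) by (rule has_loop_iso_iff)
  ultimately show ?thesis
    using has_loop_iff[OF assms(1)] assms(3) by auto
qed

lemma bij_betw_iso_head_0:
  assumes "2 \<le> p" "is_schreier_iso p z z' f g"
  shows "bij_betw f {u \<in> orbit p z. u 0 = 0} {u \<in> orbit p z'. u 0 = 0}"
    and "bij_betw f {u \<in> orbit p z. u 0 \<noteq> 0} {u \<in> orbit p z'. u 0 \<noteq> 0}"
proof -
  show "bij_betw f {u \<in> orbit p z. u 0 = 0} {u \<in> orbit p z'. u 0 = 0}"
    by (rule bij_betw_Collect[OF schreier_iso_bij_betw_orbit[OF assms(2)]])
      (rule iso_head_eq_0_iff[OF assms])
  show "bij_betw f {u \<in> orbit p z. u 0 \<noteq> 0} {u \<in> orbit p z'. u 0 \<noteq> 0}"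
    by (rule bij_betw_Collect[OF schreier_iso_bij_betw_orbit[OF assms(2)]])
      (simp add: iso_head_eq_0_iff[OF assms])
qed

lemma zero_neighbours_iso:
  assumes "2 \<le> p" "is_schreier_iso p z z' f g" "m \<in> orbit p z"
  shows "zero_neighbours p z' (f m) = f ` zero_neighbours p z m"
proof -
  have "f ` zero_neighbours p z m = f ` {u \<in> orbit p z. adjacent p z' (f m) (f u) \<and> f u 0 = 0}"
    using adjacent_iso_iff[OF assms(2,3)] iso_head_eq_0_iff[OF assms(1,2)]
    by (auto simp: zero_neighbours_def)
  also have "\<dots> = {v \<in> f ` orbit p z. adjacent p z' (f m) v \<and> v 0 = 0}"
    by auto
  also have "\<dots> = zero_neighbours p z' (f m)"
    using schreier_iso_bij_betw_orbit[OF assms(2)]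
    by (simp add: zero_neighbours_def bij_betw_imp_surj_on)
  finally show ?thesis ..
qed

lemma bij_betw_inverse_pair:
  assumes "\<forall>a\<in>A. g (f a) = a" "\<forall>b\<in>B. f (g b) = b" "f ` A \<subseteq> B" "g ` B \<subseteq> A"
  shows "bij_betw f A B" "bij_betw g B A"
  using assms by (auto intro: bij_betw_byWitness)

lemma bij_betw_word_cons_0:
  assumes "z 0 \<le> p"
  shows "bij_betw (word_cons 0) (orbit p (word_tail z)) {u \<in> orbit p z. u 0 = 0}"
    and "bij_betw word_tail {u \<in> orbit p z. u 0 = 0} (orbit p (word_tail z))"
proof -
  have "\<forall>u\<in>{u \<in> orbit p z. u 0 = 0}. word_cons 0 (word_tail u) = u"
    using word_cons_head_tail by (metis (mono_tags, lifting) mem_Collect_eq)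
  moreover have "word_cons 0 ` orbit p (word_tail z) \<subseteq> {u \<in> orbit p z. u 0 = 0}"
    using orbit_word_cons[of z p, OF assms _ le0] by auto
  moreover have "word_tail ` {u \<in> orbit p z. u 0 = 0} \<subseteq> orbit p (word_tail z)"
    using orbit_word_tail by blast
  ultimately show "bij_betw (word_cons 0) (orbit p (word_tail z)) {u \<in> orbit p z. u 0 = 0}"
    and "bij_betw word_tail {u \<in> orbit p z. u 0 = 0} (orbit p (word_tail z))"
    using bij_betw_inverse_pair[of "orbit p (word_tail z)" word_tail "word_cons 0"] by simp_all
qed

text \<open>A vertex \<open>j x\<close> of \<open>\<Gamma>(z)\<close> with \<open>j \<noteq> 0\<close> stands for the edge \<open>(e\<^sub>j\<^sup>-\<^sup>1 x, j)\<close> of \<open>\<Gamma>(\<sigma>z)\<close>: its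
  neighbours beginning with 0 are \<open>0 e\<^sub>j\<^sup>-\<^sup>1 x\<close> and \<open>0 x\<close>, the ends of that edge with 0 prepended.\<close>

fun edge_to_vertex :: "(nat \<Rightarrow> nat) \<times> nat \<Rightarrow> nat \<Rightarrow> nat" where
  "edge_to_vertex (y, j) = word_cons j (gen_e j y)"

definition vertex_to_edge :: "(nat \<Rightarrow> nat) \<Rightarrow> (nat \<Rightarrow> nat) \<times> nat" where
  "vertex_to_edge m = (carry (m 0) 0 (word_tail m), m 0)"

lemma edge_to_vertex_vertex_to_edge [simp]: "m 0 \<noteq> 0 \<Longrightarrow> edge_to_vertex (vertex_to_edge m) = m"
  using word_cons_head_tail[of m] by (simp add: vertex_to_edge_def)

lemma bij_betw_edge_to_vertex:
  assumes "z 0 \<le> p"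
  shows "bij_betw edge_to_vertex (schreier_edges p (word_tail z)) {u \<in> orbit p z. u 0 \<noteq> 0}"
    and "bij_betw vertex_to_edge {u \<in> orbit p z. u 0 \<noteq> 0} (schreier_edges p (word_tail z))"
proof -
  have "\<forall>\<epsilon>\<in>schreier_edges p (word_tail z). vertex_to_edge (edge_to_vertex \<epsilon>) = \<epsilon>"
    by (auto simp: schreier_edges_def vertex_to_edge_def)
  moreover have "\<forall>u\<in>{u \<in> orbit p z. u 0 \<noteq> 0}. edge_to_vertex (vertex_to_edge u) = u"
    by simp
  moreover have "edge_to_vertex ` schreier_edges p (word_tail z) \<subseteq> {u \<in> orbit p z. u 0 \<noteq> 0}"
  proof -
    have "edge_to_vertex (y, j) \<in> {u \<in> orbit p z. u 0 \<noteq> 0}"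
      if "(y, j) \<in> schreier_edges p (word_tail z)" for y j
      using that by (auto intro!: orbit_word_cons[of z p, OF assms] orbit.fwd)
    then show ?thesis by auto
  qed
  moreover have "vertex_to_edge ` {u \<in> orbit p z. u 0 \<noteq> 0} \<subseteq> schreier_edges p (word_tail z)"
  proof -
    have "vertex_to_edge u \<in> schreier_edges p (word_tail z)" if u: "u \<in> orbit p z" "u 0 \<noteq> 0" for u
    proof -
      have "gen_e (u 0) (carry (u 0) 0 (word_tail u)) = word_tail u"
        using u(2) by simp
      moreover have "u 0 \<le> p" using orbit_head_le[OF assms u(1)] .
      ultimately show ?thesis
        using u orbit.bwd[OF orbit_word_tail[OF u(1)], of "u 0"] by (simp add: vertex_to_edge_def)
    qed
    then show ?thesis by auto
  qed
  ultimately show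
    "bij_betw edge_to_vertex (schreier_edges p (word_tail z)) {u \<in> orbit p z. u 0 \<noteq> 0}"
    "bij_betw vertex_to_edge {u \<in> orbit p z. u 0 \<noteq> 0} (schreier_edges p (word_tail z))"
    using bij_betw_inverse_pair[of "schreier_edges p (word_tail z)" vertex_to_edge edge_to_vertex]
    by simp_all
qed

lemma adjacent_edge_to_vertex_iff:
  assumes j: "1 \<le> j" "j \<le> p" and m: "word_cons j (gen_e j y) \<in> orbit p z"
    and u: "u \<in> orbit p z" "u 0 = 0"
  shows "adjacent p z (word_cons j (gen_e j y)) u \<longleftrightarrow> u = word_cons 0 y \<or> u = word_cons 0 (gen_e j y)"
proof
  let ?m = "word_cons j (gen_e j y)"
  assume "adjacent p z ?m u"
  then obtain \<delta> where \<delta>: "\<delta> \<in> schreier_edges p z" "edge_ends \<delta> = {?m, u}"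
    unfolding adjacent_def by blast
  then obtain i where i: "1 \<le> i" "\<delta> = (?m, i) \<and> gen_e i ?m = u \<or> \<delta> = (u, i) \<and> gen_e i u = ?m"
    by (rule schreier_edge_between)
  obtain u' where u': "u = word_cons 0 u'"
    using u(2) word_cons_head_tail by metis
  from i(2) show "u = word_cons 0 y \<or> u = word_cons 0 (gen_e j y)"
  proof (elim disjE conjE)
    assume "gen_e i ?m = u"
    then have "u = word_cons 0 (gen_e j y)"
      using i(1) j(1) u' by (auto simp: gen_e_word_cons split: if_splits)
    then show ?thesis by simp
  next
    assume "gen_e i u = ?m"
    then have "i = j" "gen_e j u' = gen_e j y"
      using i(1) u' by (auto simp: gen_e_word_cons)
    then show ?thesis using j(1) u' by (simp add: gen_e_eq_iff)
  qed
next
  let ?m = "word_cons j (gen_e j y)"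
  assume "u = word_cons 0 y \<or> u = word_cons 0 (gen_e j y)"
  then show "adjacent p z ?m u"
  proof
    assume "u = word_cons 0 y"
    then have "edge_ends (u, j) = {?m, u}" using j(1) by (auto simp: gen_e_word_cons)
    then show ?thesis
      unfolding adjacent_def using u(1) j by (intro bexI[of _ "(u, j)"]) simp_all
  next
    assume "u = word_cons 0 (gen_e j y)"
    then have "edge_ends (?m, j) = {?m, u}" using j(1) by (simp add: gen_e_word_cons)
    then show ?thesis
      unfolding adjacent_def using m j by (intro bexI[of _ "(?m, j)"]) simp_all
  qed
qed

lemma zero_neighbours_edge_to_vertex:
  assumes "z 0 \<le> p" "\<epsilon> \<in> schreier_edges p (word_tail z)"
  shows "zero_neighbours p z (edge_to_vertex \<epsilon>) = word_cons 0 ` edge_ends \<epsilon>"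
proof -
  obtain y j where \<epsilon>: "\<epsilon> = (y, j)" by (cases \<epsilon>)
  with assms(2) have j: "1 \<le> j" "j \<le> p" and y: "y \<in> orbit p (word_tail z)" by auto
  have "gen_e j y \<in> orbit p (word_tail z)" using orbit.fwd[OF y j] .
  then have m: "word_cons j (gen_e j y) \<in> orbit p z"
    and ends: "word_cons 0 y \<in> orbit p z" "word_cons 0 (gen_e j y) \<in> orbit p z"
    using y orbit_word_cons[of z p, OF assms(1)] j(2) by auto
  have "zero_neighbours p z (word_cons j (gen_e j y)) =
      {u \<in> orbit p z. u 0 = 0 \<and> (u = word_cons 0 y \<or> u = word_cons 0 (gen_e j y))}"
    using adjacent_edge_to_vertex_iff[OF j m] unfolding zero_neighbours_def by blast
  also have "\<dots> = word_cons 0 ` {y, gen_e j y}"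
    using ends by auto
  finally show ?thesis by (simp add: \<epsilon>)
qed

lemma zero_neighbours_nonzero_head:
  assumes "z 0 \<le> p" "m \<in> orbit p z" "m 0 \<noteq> 0"
  shows "zero_neighbours p z m = {word_cons 0 (carry (m 0) 0 (word_tail m)), word_cons 0 (word_tail m)}"
proof -
  have "vertex_to_edge m \<in> schreier_edges p (word_tail z)"
    using bij_betw_apply[OF bij_betw_edge_to_vertex(2)[of z p, OF assms(1)]] assms(2,3) by blast
  from zero_neighbours_edge_to_vertex[of z p, OF assms(1) this] assms(3) show ?thesis
    by (simp add: vertex_to_edge_def)
qed

lemma schreier_iso_word_cons_0:
  assumes "2 \<le> p" "z 0 \<le> p" "is_schreier_iso p z z' f g" "y \<in> orbit p (word_tail z)"
  shows "f (word_cons 0 y) = word_cons 0 (word_tail (f (word_cons 0 y)))"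
proof -
  have "word_cons 0 y \<in> orbit p z"
    using orbit_word_cons[of z p, OF assms(2,4)] by simp
  then have "f (word_cons 0 y) 0 = 0"
    using iso_head_eq_0_iff[OF assms(1,3)] by simp
  then show ?thesis using word_cons_head_tail[of "f (word_cons 0 y)"] by simp
qed

lemma schreier_iso_tail:
  assumes "2 \<le> p" "z 0 \<le> p" "z' 0 \<le> p" and iso: "is_schreier_iso p z z' f g"
  shows "is_schreier_iso p (word_tail z) (word_tail z')
    (\<lambda>y. word_tail (f (word_cons 0 y))) (\<lambda>\<epsilon>. vertex_to_edge (f (edge_to_vertex \<epsilon>)))"
proof -
  let ?F = "\<lambda>y. word_tail (f (word_cons 0 y))"
  let ?G = "\<lambda>\<epsilon>. vertex_to_edge (f (edge_to_vertex \<epsilon>))"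
  note f0 = bij_betw_iso_head_0(1)[OF assms(1) iso] and f1 = bij_betw_iso_head_0(2)[OF assms(1) iso]
  have "bij_betw (word_tail \<circ> f \<circ> word_cons 0) (orbit p (word_tail z)) (orbit p (word_tail z'))"
    using bij_betw_word_cons_0(1)[of z p, OF assms(2)] f0 bij_betw_word_cons_0(2)[of z' p, OF assms(3)]
    by (intro bij_betw_trans)
  then have F: "bij_betw ?F (orbit p (word_tail z)) (orbit p (word_tail z'))"
    by (simp add: comp_def)
  have "bij_betw (vertex_to_edge \<circ> f \<circ> edge_to_vertex)
      (schreier_edges p (word_tail z)) (schreier_edges p (word_tail z'))"
    using bij_betw_edge_to_vertex(1)[of z p, OF assms(2)] f1 bij_betw_edge_to_vertex(2)[of z' p, OF assms(3)]
    by (intro bij_betw_trans)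
  then have G: "bij_betw ?G (schreier_edges p (word_tail z)) (schreier_edges p (word_tail z'))"
    by (simp add: comp_def)
  have "edge_ends (?G \<epsilon>) = ?F ` edge_ends \<epsilon>" if \<epsilon>: "\<epsilon> \<in> schreier_edges p (word_tail z)" for \<epsilon>
  proof -
    have v: "edge_to_vertex \<epsilon> \<in> {u \<in> orbit p z. u 0 \<noteq> 0}"
      using bij_betw_apply[OF bij_betw_edge_to_vertex(1)[of z p, OF assms(2)] \<epsilon>] .
    then have "f (edge_to_vertex \<epsilon>) 0 \<noteq> 0"
      using bij_betw_apply[OF f1] by blast
    then have "edge_to_vertex (?G \<epsilon>) = f (edge_to_vertex \<epsilon>)" by simp
    then have "word_cons 0 ` edge_ends (?G \<epsilon>) = zero_neighbours p z' (f (edge_to_vertex \<epsilon>))"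
      using zero_neighbours_edge_to_vertex[of z' p, OF assms(3) bij_betw_apply[OF G \<epsilon>]] by simp
    also have "\<dots> = f ` word_cons 0 ` edge_ends \<epsilon>"
      using zero_neighbours_iso[OF assms(1) iso] v zero_neighbours_edge_to_vertex[of z p, OF assms(2) \<epsilon>]
      by simp
    also have "\<dots> = word_cons 0 ` ?F ` edge_ends \<epsilon>"
      using schreier_iso_word_cons_0[OF assms(1,2) iso] edge_ends_subset_orbit[OF \<epsilon>]
      by (force simp: image_image)
    finally show ?thesis
      by (simp add: inj_image_eq_iff inj_def)
  qed
  with F G show ?thesis by (simp add: is_schreier_iso_def)
qed

lemma schreier_iso_tail_root:
  assumes "2 \<le> p" "z 0 \<le> p" "z' 0 \<le> p" and iso: "is_schreier_iso p z z' f g" and "f z = z'"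
    and second: "z (Suc 0) = 0 \<longleftrightarrow> z' (Suc 0) = 0"
  shows "word_tail (f (word_cons 0 (word_tail z))) = word_tail z'"
proof (cases "z 0 = 0")
  case True
  then show ?thesis using word_cons_head_tail[of z] \<open>f z = z'\<close> by simp
next
  case False
  let ?u = "word_cons 0 (word_tail z)"
  define w where "w = carry (z' 0) 0 (word_tail z')"
  have z: "z \<in> orbit p z" by (rule orbit.base)
  have "z' 0 \<noteq> 0"
    using iso_head_eq_0_iff[OF assms(1) iso z] False \<open>f z = z'\<close> by simp
  have u: "?u \<in> zero_neighbours p z z"
    using zero_neighbours_nonzero_head[of z p z, OF assms(2) z False] by simp
  then have fu: "f ?u \<in> {word_cons 0 w, word_cons 0 (word_tail z')}"
    using zero_neighbours_iso[OF assms(1) iso z] \<open>f z = z'\<close>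
      zero_neighbours_nonzero_head[of z' p z', OF assms(3) orbit.base \<open>z' 0 \<noteq> 0\<close>]
    by (simp add: w_def)
  \<comment> \<open>of the two candidates, only \<open>0 (word_tail z')\<close> agrees with \<open>?u\<close> on having a double edge\<close>
  show ?thesis
  proof (rule ccontr)
    assume "word_tail (f ?u) \<noteq> word_tail z'"
    with fu have "f ?u = word_cons 0 w" "w \<noteq> word_tail z'" by auto
    moreover have gen_w: "gen_e (z' 0) w = word_tail z'"
      using \<open>z' 0 \<noteq> 0\<close> by (simp add: w_def)
    ultimately have fu: "f ?u = word_cons 0 w" and moved: "gen_e (z' 0) w \<noteq> w" by auto
    have "?u \<in> orbit p z" and "f ?u \<in> orbit p z'"
      using u zero_neighbours_iso[OF assms(1) iso z] \<open>f z = z'\<close> by (auto simp: zero_neighbours_def)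
    then have "has_multi_edge p z ?u \<longleftrightarrow> z (Suc 0) \<noteq> 0"
      "has_multi_edge p z' (f ?u) \<longleftrightarrow> w 0 \<noteq> 0"
      using has_multi_edge_iff[OF assms(1)] fu
      by (simp_all add: simple_at_def word_tail_def)
    then have "w 0 = 0 \<longleftrightarrow> gen_e (z' 0) w 0 = 0"
      using has_multi_edge_iso_iff[OF iso \<open>?u \<in> orbit p z\<close>] second gen_w
      by (auto simp: word_tail_def)
    then show False
      using gen_e_moved_head[OF \<open>z' 0 \<noteq> 0\<close> moved] \<open>z' 0 \<noteq> 0\<close> by (auto simp: doubleton_eq_iff)
  qed
qed

definition rooted_iso :: "nat \<Rightarrow> (nat \<Rightarrow> nat) \<Rightarrow> (nat \<Rightarrow> nat) \<Rightarrow> bool" where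
  "rooted_iso p z z' \<longleftrightarrow> (\<exists>f g. is_schreier_iso p z z' f g \<and> f z = z')"

lemma rooted_iso_tail:
  assumes "2 \<le> p" "z 0 \<le> p" "z' 0 \<le> p" "rooted_iso p z z'"
    and "z (Suc 0) = 0 \<longleftrightarrow> z' (Suc 0) = 0"
  shows "rooted_iso p (word_tail z) (word_tail z')"
proof -
  obtain f g where iso: "is_schreier_iso p z z' f g" and "f z = z'"
    using assms(4) unfolding rooted_iso_def by blast
  let ?F = "\<lambda>y. word_tail (f (word_cons 0 y))"
  let ?G = "\<lambda>\<epsilon>. vertex_to_edge (f (edge_to_vertex \<epsilon>))"
  have "is_schreier_iso p (word_tail z) (word_tail z') ?F ?G"
    by (rule schreier_iso_tail[OF assms(1-3) iso])
  moreover have "?F (word_tail z) = word_tail z'"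
    using schreier_iso_tail_root[OF assms(1-3) iso \<open>f z = z'\<close> assms(5)] by simp
  ultimately show ?thesis
    unfolding rooted_iso_def by (intro exI[of _ ?F] exI[of _ ?G]) simp
qed

definition word_drop :: "nat \<Rightarrow> (nat \<Rightarrow> nat) \<Rightarrow> nat \<Rightarrow> nat" where
  "word_drop n z = (\<lambda>k. z (n + k))"

lemma rooted_iso_word_drop:
  assumes "2 \<le> p" "z \<in> X_inf p" "z' \<in> X_inf p" "rooted_iso p z z'" "\<forall>k\<le>n. z k = z' k"
  shows "rooted_iso p (word_drop n z) (word_drop n z')"
  using assms(5)
proof (induction n)
  case 0
  then show ?case using assms(4) by (simp add: word_drop_def)
next
  case (Suc n)
  have "rooted_iso p (word_tail (word_drop n z)) (word_tail (word_drop n z'))"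
    using Suc assms(2,3) by (intro rooted_iso_tail[OF assms(1)]) (auto simp: word_drop_def X_inf_def)
  moreover have "word_tail (word_drop n x) = word_drop (Suc n) x" for x
    by (simp add: word_tail_def word_drop_def)
  ultimately show ?case by simp
qed

lemma rooted_iso_simple_at_0:
  assumes "2 \<le> p" "z 0 \<le> p" "z' 0 \<le> p" "rooted_iso p z z'"
  shows "simple_at z 0 \<longleftrightarrow> simple_at z' 0"
proof -
  obtain f g where iso: "is_schreier_iso p z z' f g" and "f z = z'"
    using assms(4) unfolding rooted_iso_def by blast
  have "has_multi_edge p z' z' \<longleftrightarrow> has_multi_edge p z z"
    using has_multi_edge_iso_iff[OF iso orbit.base] \<open>f z = z'\<close> by simp
  then show ?thesis
    using has_multi_edge_iff[OF assms(1) orbit.base] assms(2,3) by simp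
qed

lemma rooted_iso_simple_at:
  assumes "2 \<le> p" "z \<in> X_inf p" "z' \<in> X_inf p" "rooted_iso p z z'" "\<forall>k\<le>n. z k = z' k"
  shows "simple_at z n \<longleftrightarrow> simple_at z' n"
proof -
  have "simple_at (word_drop n z) 0 \<longleftrightarrow> simple_at (word_drop n z') 0"
    using assms(2,3) by (intro rooted_iso_simple_at_0[OF assms(1) _ _ rooted_iso_word_drop[OF assms]])
      (simp_all add: word_drop_def X_inf_def)
  then show ?thesis by (simp add: simple_at_def word_drop_def)
qed

lemma simple_at_forbids_letter:
  assumes "2 \<le> p"
  shows "\<exists>a\<le>p. \<forall>z'. z' n = z n \<longrightarrow> (simple_at z' n \<longleftrightarrow> simple_at z n) \<longrightarrow> z' (Suc n) \<noteq> a"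
proof (cases "simple_at z n")
  case True
  obtain i where "i \<in> {1..p}" "z n \<noteq> i" using exists_generator_ne[OF assms] by blast
  with True show ?thesis by (intro exI[of _ i]) (auto simp: simple_at_def)
next
  case False
  then show ?thesis by (intro exI[of _ 0]) (auto simp: simple_at_def)
qed

section \<open>Sets of words with a forbidden letter after every prefix\<close>

definition pruned :: "nat \<Rightarrow> (nat \<Rightarrow> nat) set \<Rightarrow> bool" where
  "pruned p S \<longleftrightarrow> (\<forall>z\<in>S. \<forall>n. \<exists>a\<le>p. \<forall>z'\<in>S. (\<forall>k\<le>n. z' k = z k) \<longrightarrow> z' (Suc n) \<noteq> a)"

definition word_prefixes :: "nat \<Rightarrow> (nat \<Rightarrow> nat) set \<Rightarrow> (nat \<Rightarrow> nat) set" where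
  "word_prefixes N S = (\<lambda>z. restrict z {..N}) ` S"

definition cylinder :: "nat \<Rightarrow> (nat \<Rightarrow> nat) \<Rightarrow> (nat \<Rightarrow> nat) set" where
  "cylinder N s = {z. \<forall>k\<le>N. z k = s k}"

lemma finite_word_prefixes:
  assumes "S \<subseteq> X_inf p"
  shows "finite (word_prefixes N S)"
proof (rule finite_subset)
  show "word_prefixes N S \<subseteq> {..N} \<rightarrow>\<^sub>E {0..p}"
    using assms unfolding word_prefixes_def
    by (intro image_subsetI) (auto simp: X_inf_def restrict_PiE_iff)
qed (simp add: finite_PiE)

lemma card_word_prefixes_0_le:
  assumes "S \<subseteq> X_inf p"
  shows "card (word_prefixes 0 S) \<le> p + 1"
proof -
  have "card (word_prefixes 0 S) \<le> card {0..p}"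
  proof (rule card_inj_on_le[where f = "\<lambda>t. t 0"])
    show "inj_on (\<lambda>t. t 0) (word_prefixes 0 S)"
      by (auto intro!: inj_onI ext simp: word_prefixes_def restrict_def)
    show "(\<lambda>t. t 0) ` word_prefixes 0 S \<subseteq> {0..p}"
      using assms by (auto simp: word_prefixes_def X_inf_def)
  qed simp
  then show ?thesis by simp
qed

lemma pruned_obtains_forbidden_letters:
  assumes "pruned p S"
  obtains forb where "\<And>s. s \<in> word_prefixes N S \<Longrightarrow> forb s \<le> p"
    "\<And>s z. s \<in> word_prefixes N S \<Longrightarrow> z \<in> S \<Longrightarrow> restrict z {..N} = s \<Longrightarrow> z (Suc N) \<noteq> forb s"
proof -
  have "\<forall>s\<in>word_prefixes N S. \<exists>a\<le>p. \<forall>z\<in>S. restrict z {..N} = s \<longrightarrow> z (Suc N) \<noteq> a"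
  proof
    fix s assume "s \<in> word_prefixes N S"
    then obtain z where z: "z \<in> S" "s = restrict z {..N}" by (auto simp: word_prefixes_def)
    with assms obtain a where "a \<le> p" "\<forall>z'\<in>S. (\<forall>k\<le>N. z' k = z k) \<longrightarrow> z' (Suc N) \<noteq> a"
      unfolding pruned_def by blast
    moreover have "restrict z' {..N} = s \<Longrightarrow> \<forall>k\<le>N. z' k = z k" for z'
      using z(2) by (metis atMost_iff restrict_apply')
    ultimately show "\<exists>a\<le>p. \<forall>z\<in>S. restrict z {..N} = s \<longrightarrow> z (Suc N) \<noteq> a"
      by blast
  qed
  then obtain forb where
    "\<forall>s\<in>word_prefixes N S. forb s \<le> p \<and> (\<forall>z\<in>S. restrict z {..N} = s \<longrightarrow> z (Suc N) \<noteq> forb s)"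
    by (fastforce dest: bchoice)
  note forb = this
  show thesis
    by (rule that[of forb]) (use forb in auto)
qed

lemma card_word_prefixes_Suc_le:
  assumes "S \<subseteq> X_inf p" "pruned p S"
  shows "card (word_prefixes (Suc N) S) \<le> card (word_prefixes N S) * p"
proof -
  obtain forb where forb: "\<And>s. s \<in> word_prefixes N S \<Longrightarrow> forb s \<le> p"
    "\<And>s z. s \<in> word_prefixes N S \<Longrightarrow> z \<in> S \<Longrightarrow> restrict z {..N} = s \<Longrightarrow> z (Suc N) \<noteq> forb s"
    using assms(2) by (rule pruned_obtains_forbidden_letters[where N = N]) blast
  \<comment> \<open>a prefix of length \<open>N + 2\<close> is a prefix of length \<open>N + 1\<close> followed by a letter that is not forbidden\<close>
  have "card (word_prefixes (Suc N) S) \<le> card (SIGMA s:word_prefixes N S. {0..p} - {forb s})"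
  proof (rule card_inj_on_le[where f = "\<lambda>t. (restrict t {..N}, t (Suc N))"])
    show "inj_on (\<lambda>t. (restrict t {..N}, t (Suc N))) (word_prefixes (Suc N) S)"
    proof (rule inj_onI)
      fix t t' assume "t \<in> word_prefixes (Suc N) S" "t' \<in> word_prefixes (Suc N) S"
        and eq: "(restrict t {..N}, t (Suc N)) = (restrict t' {..N}, t' (Suc N))"
      then obtain z z' where "t = restrict z {..Suc N}" "t' = restrict z' {..Suc N}"
        by (auto simp: word_prefixes_def)
      with eq show "t = t'"
        by (auto simp: restrict_def fun_eq_iff le_Suc_eq split: if_splits)
    qed
    have "(restrict (restrict z {..Suc N}) {..N}, restrict z {..Suc N} (Suc N))
        \<in> (SIGMA s:word_prefixes N S. {0..p} - {forb s})" if "z \<in> S" for z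
    proof -
      have "restrict z {..N} \<in> word_prefixes N S" "z (Suc N) \<le> p"
        using that assms(1) by (auto simp: word_prefixes_def X_inf_def)
      with that forb(2) show ?thesis by (auto simp: Int_absorb1)
    qed
    then show "(\<lambda>t. (restrict t {..N}, t (Suc N))) ` word_prefixes (Suc N) S
        \<subseteq> (SIGMA s:word_prefixes N S. {0..p} - {forb s})"
      by (auto simp: word_prefixes_def)
    show "finite (SIGMA s:word_prefixes N S. {0..p} - {forb s})"
      using finite_word_prefixes[OF assms(1)] by auto
  qed
  also have "\<dots> = card (word_prefixes N S) * p"
    using finite_word_prefixes[OF assms(1)] forb(1) by (simp add: card_SigmaI)
  finally show ?thesis .
qed

lemma card_word_prefixes_le:
  assumes "S \<subseteq> X_inf p" "pruned p S"
  shows "card (word_prefixes N S) \<le> (p + 1) * p ^ N"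
proof (induction N)
  case 0
  then show ?case using card_word_prefixes_0_le[OF assms(1)] by simp
next
  case (Suc N)
  have "card (word_prefixes (Suc N) S) \<le> card (word_prefixes N S) * p"
    using assms by (rule card_word_prefixes_Suc_le)
  also have "\<dots> \<le> (p + 1) * p ^ N * p"
    using Suc.IH by (rule mult_right_mono) simp
  also have "\<dots> = (p + 1) * p ^ Suc N"
    by (simp only: power_Suc2 mult.assoc)
  finally show ?case .
qed

lemma cylinder_eq_prod_emb:
  "cylinder N s = prod_emb UNIV (\<lambda>_. measure_pmf (pmf_of_set {0..p})) {..N} (\<Pi>\<^sub>E k\<in>{..N}. {s k})"
  by (auto simp: cylinder_def prod_emb_def space_PiM PiE_iff)

lemma sets_nu_cylinder: "cylinder N s \<in> sets (nu p)"
  unfolding cylinder_eq_prod_emb[of N s p] nu_def by (rule sets_PiM_I) auto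

lemma emeasure_nu_cylinder:
  assumes "\<forall>k\<le>N. s k \<le> p"
  shows "emeasure (nu p) (cylinder N s) = ennreal ((1 / (real p + 1)) ^ Suc N)"
proof -
  have "emeasure (nu p) (cylinder N s) =
      (\<Prod>k\<in>{..N}. emeasure (measure_pmf (pmf_of_set {0..p})) {s k})"
    unfolding cylinder_eq_prod_emb[of N s p] nu_def
    by (rule emeasure_PiM_emb) (auto intro: prob_space_measure_pmf)
  also have "\<dots> = (\<Prod>k\<in>{..N}. ennreal (1 / (real p + 1)))"
    using assms by (intro prod.cong) (auto simp: emeasure_pmf_single pmf_of_set)
  also have "\<dots> = ennreal ((1 / (real p + 1)) ^ Suc N)"
    by (simp only: prod_constant card_atMost) (rule ennreal_power, simp)
  finally show ?thesis .
qed

lemma emeasure_cylinders_word_prefixes_le: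
  assumes "S \<subseteq> X_inf p" "pruned p S"
  shows "emeasure (nu p) (\<Union>s\<in>word_prefixes N S. cylinder N s) \<le> ennreal ((real p / (real p + 1)) ^ N)"
proof -
  have letters: "\<forall>k\<le>N. s k \<le> p" if "s \<in> word_prefixes N S" for s
    using that assms(1) by (auto simp: word_prefixes_def X_inf_def)
  have "emeasure (nu p) (\<Union>s\<in>word_prefixes N S. cylinder N s) \<le> (\<Sum>s\<in>word_prefixes N S. emeasure (nu p) (cylinder N s))"
    using finite_word_prefixes[OF assms(1)] sets_nu_cylinder by (intro emeasure_subadditive_finite) auto
  also have "\<dots> = (\<Sum>s\<in>word_prefixes N S. ennreal ((1 / (real p + 1)) ^ Suc N))"
    using letters by (intro sum.cong) (simp_all add: emeasure_nu_cylinder)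
  also have "\<dots> = ennreal (real (card (word_prefixes N S)) * (1 / (real p + 1)) ^ Suc N)"
    by (subst ennreal_mult) (auto simp: ennreal_of_nat_eq_real_of_nat)
  also have "\<dots> \<le> ennreal ((real p / (real p + 1)) ^ N)"
  proof (rule ennreal_leI)
    have "real (card (word_prefixes N S)) \<le> real ((p + 1) * p ^ N)"
      using card_word_prefixes_le[OF assms] by (simp only: of_nat_le_iff)
    then have "real (card (word_prefixes N S)) * (1 / (real p + 1)) ^ Suc N \<le>
        real ((p + 1) * p ^ N) * (1 / (real p + 1)) ^ Suc N"
      by (rule mult_right_mono) simp
    also have "\<dots> = ((real p + 1) * (1 / (real p + 1))) * (real p ^ N * (1 / (real p + 1)) ^ N)"
    proof -
      have "real ((p + 1) * p ^ N) = (real p + 1) * real p ^ N"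
        by (simp add: algebra_simps)
      then show ?thesis by (simp only: power_Suc2 mult_ac)
    qed
    also have "\<dots> = (real p / (real p + 1)) ^ N"
      by (simp add: power_divide)
    finally show "real (card (word_prefixes N S)) * (1 / (real p + 1)) ^ Suc N \<le> (real p / (real p + 1)) ^ N" .
  qed
  finally show ?thesis .
qed

lemma null_sets_if_pruned:
  assumes "S \<subseteq> X_inf p" "pruned p S"
  shows "S \<in> null_sets (completion (nu p))"
proof -
  define B where "B = (\<Inter>N. \<Union>s\<in>word_prefixes N S. cylinder N s)"
  have sets: "(\<Union>s\<in>word_prefixes N S. cylinder N s) \<in> sets (nu p)" for N
    using finite_word_prefixes[OF assms(1)] sets_nu_cylinder by (intro sets.finite_UN) auto
  then have "B \<in> sets (nu p)"
    unfolding B_def by auto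
  have "emeasure (nu p) B \<le> ennreal ((real p / (real p + 1)) ^ N)" for N
  proof -
    have "emeasure (nu p) B \<le> emeasure (nu p) (\<Union>s\<in>word_prefixes N S. cylinder N s)"
      using sets by (intro emeasure_mono) (auto simp: B_def)
    then show ?thesis
      using emeasure_cylinders_word_prefixes_le[OF assms] by (rule order_trans)
  qed
  moreover have "(\<lambda>N. ennreal ((real p / (real p + 1)) ^ N)) \<longlonglongrightarrow> ennreal 0"
    by (intro tendsto_ennrealI LIMSEQ_power_zero) auto
  ultimately have "emeasure (nu p) B \<le> ennreal 0"
    by (intro LIMSEQ_le_const[where X = "\<lambda>N. ennreal ((real p / (real p + 1)) ^ N)"]) auto
  with \<open>B \<in> sets (nu p)\<close> have "B \<in> null_sets (nu p)"
    by auto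
  moreover have "S \<subseteq> B"
  proof
    fix z assume "z \<in> S"
    then have "z \<in> (\<Union>s\<in>word_prefixes N S. cylinder N s)" for N
      by (intro UN_I[of "restrict z {..N}"]) (auto simp: word_prefixes_def cylinder_def)
    then show "z \<in> B" by (simp add: B_def)
  qed
  ultimately show ?thesis
    unfolding null_sets_completion_iff2 by blast
qed

lemma pruned_if_rooted_iso:
  assumes "2 \<le> p" "S \<subseteq> X_inf p" "\<And>z z'. z \<in> S \<Longrightarrow> z' \<in> S \<Longrightarrow> rooted_iso p z z'"
  shows "pruned p S"
  unfolding pruned_def
proof (intro ballI allI)
  fix z n assume "z \<in> S"
  obtain a where "a \<le> p"
    and a: "\<forall>z'. z' n = z n \<longrightarrow> (simple_at z' n \<longleftrightarrow> simple_at z n) \<longrightarrow> z' (Suc n) \<noteq> a"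
    using simple_at_forbids_letter[OF assms(1)] by blast
  have "z' (Suc n) \<noteq> a" if "z' \<in> S" "\<forall>k\<le>n. z' k = z k" for z'
  proof -
    have "simple_at z' n \<longleftrightarrow> simple_at z n"
      using that(1) \<open>z \<in> S\<close> assms(2)
      by (intro rooted_iso_simple_at[OF assms(1) _ _ assms(3) that(2)]) auto
    with a that(2) show ?thesis by simp
  qed
  with \<open>a \<le> p\<close> show "\<exists>a\<le>p. \<forall>z'\<in>S. (\<forall>k\<le>n. z' k = z k) \<longrightarrow> z' (Suc n) \<noteq> a"
    by blast
qed

lemma rooted_iso_if_same_root_image:
  assumes "\<exists>f g. is_schreier_iso p z w f g \<and> f z = v" "\<exists>f g. is_schreier_iso p z' w f g \<and> f z' = v"
  shows "rooted_iso p z z'"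
proof -
  obtain f g where iso: "is_schreier_iso p z w f g" and "f z = v"
    using assms(1) by blast
  obtain f' g' where iso': "is_schreier_iso p z' w f' g'" and "f' z' = v"
    using assms(2) by blast
  let ?f = "inv_into (orbit p z') f' \<circ> f" and ?g = "inv_into (schreier_edges p z') g' \<circ> g"
  have "is_schreier_iso p z z' ?f ?g"
    using schreier_iso_comp[OF iso schreier_iso_inv[OF iso']] .
  moreover have "?f z = z'"
    using schreier_iso_inv_into_apply[OF iso' orbit.base] \<open>f z = v\<close> \<open>f' z' = v\<close> by simp
  ultimately show ?thesis
    unfolding rooted_iso_def by (intro exI[of _ ?f] exI[of _ ?g]) simp
qed

lemma null_sets_iso_with_root_image:
  assumes "2 \<le> p"
  shows "{z \<in> X_inf p. \<exists>f g. is_schreier_iso p z w f g \<and> f z = v} \<in> null_sets (completion (nu p))"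
    (is "?R \<in> _")
proof (rule null_sets_if_pruned)
  have "rooted_iso p z z'" if "z \<in> ?R" "z' \<in> ?R" for z z'
    using that by (intro rooted_iso_if_same_root_image[where w = w and v = v]) simp_all
  then show "pruned p ?R"
    by (rule pruned_if_rooted_iso[OF assms, rotated]) auto
qed auto

theorem corollary4p25:
  fixes p :: nat and w :: "nat \<Rightarrow> nat"
  assumes "p \<ge> 2" and "w \<in> X_inf p"
  shows "iso_class p w \<in> null_sets (completion (nu p))"
proof -
  let ?R = "\<lambda>v. {z \<in> X_inf p. \<exists>f g. is_schreier_iso p z w f g \<and> f z = v}"
  have "(\<Union>v\<in>orbit p w. ?R v) \<in> null_sets (completion (nu p))"
    using orbit_countable null_sets_iso_with_root_image[OF assms(1)] by (intro null_sets_UN') auto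
  moreover have "iso_class p w \<subseteq> (\<Union>v\<in>orbit p w. ?R v)"
  proof
    fix z assume "z \<in> iso_class p w"
    then obtain f g where "z \<in> X_inf p" and iso: "is_schreier_iso p z w f g"
      by (auto simp: iso_class_def schreier_iso_iff)
    moreover have "f z \<in> orbit p w"
      using bij_betw_apply[OF schreier_iso_bij_betw_orbit[OF iso] orbit.base] .
    ultimately show "z \<in> (\<Union>v\<in>orbit p w. ?R v)" by blast
  qed
  ultimately show ?thesis
    by (rule null_sets_completion_subset[rotated])
qed

end
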